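(* Let $X$ and $Y$ be $\sigma$-compact metric spaces such that $X$ has no isolated points. For every closed set $T\subseteq X\times Y$ there exist a countable set $A\subseteq X$ and a function $f:A\to Y$ such that $L_f=T$.
   Context: For a function $f:A\to Y$ with $A\subseteq X$, $L_f$ denotes the set of accumulation points in $X\times Y$ of its graph $gr(f)=\{(x,f(x)):x\in A\}$. A space is $\sigma$-compact if it is a countable union of compact sets. *)

theory Defs
  imports "HOL-Analysis.Analysis"
begin

text \<open>A subset of a metric space is sigma-compact if it is a countable union of compact sets
  (a finite union is covered by padding with empty sets).\<close>
definition sigma_compact :: "'a::metric_space set \<Rightarrow> bool" where
  "sigma_compact S \<longleftrightarrow> (\<exists>F :: nat \<Rightarrow> 'a set. (\<forall>n. compact (F n)) \<and> S = (\<Union>n. F n))"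

definition graph_on :: "'a set \<Rightarrow> ('a \<Rightarrow> 'b) \<Rightarrow> ('a \<times> 'b) set" where
  "graph_on A f = (\<lambda>x. (x, f x)) ` A"

definition acc_points_in :: "'a::topological_space set \<Rightarrow> 'a set \<Rightarrow> 'a set" where
  "acc_points_in Z G = {p \<in> Z. p islimpt G}"

end

theory Submission
  imports Defs
begin

text \<open>
  A sigma-compact subset of a metric space is separable, so T has a countable dense subset D.
  Enumerate D as a sequence p in which every point recurs infinitely often.  Since X has no
  isolated points we can choose pairwise distinct points a m of X with a m within 1/(m+1) of the
  first coordinate of p m, and put f (a m) = snd (p m).  The graph points (a m, f (a m)) are
  then distinct and asymptotically equal to p m, so their accumulation points are exactly the
  closure of D, whose trace on X \<times> Y is T.
\<close>

lemma compact_imp_countable_dense: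
  fixes K :: "'a::metric_space set"
  assumes "compact K"
  obtains D where "countable D" "D \<subseteq> K" "K \<subseteq> closure D"
proof -
  have "\<forall>n::nat. \<exists>F. finite F \<and> F \<subseteq> K \<and> K \<subseteq> (\<Union>x\<in>F. ball x (1 / Suc n))"
    using seq_compact_imp_totally_bounded[OF compact_imp_seq_compact[OF assms]] by simp
  then obtain F where F: "\<And>n. finite (F n)" "\<And>n. F n \<subseteq> K"
    and cover: "\<And>n. K \<subseteq> (\<Union>x\<in>F n. ball x (1 / Suc n))"
    by metis
  show ?thesis
  proof
    show "countable (\<Union>n. F n)" using F by (simp add: countable_finite)
    show "(\<Union>n. F n) \<subseteq> K" using F by blast
    show "K \<subseteq> closure (\<Union>n. F n)"
    proof
      fix x assume "x \<in> K"
      show "x \<in> closure (\<Union>n. F n)"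
        unfolding closure_approachable
      proof (intro allI impI)
        fix e :: real assume "e > 0"
        then obtain n where n: "1 / Suc n < e" using nat_approx_posE by blast
        then obtain y where "y \<in> F n" "dist y x < 1 / Suc n"
          using cover[of n] \<open>x \<in> K\<close> by (force simp: dist_commute)
        with n show "\<exists>y\<in>\<Union>n. F n. dist y x < e" by force
      qed
    qed
  qed
qed

lemma sigma_compact_imp_countable_dense:
  fixes S :: "'a::metric_space set"
  assumes "sigma_compact S"
  obtains D where "countable D" "D \<subseteq> S" "S \<subseteq> closure D"
proof -
  obtain K :: "nat \<Rightarrow> 'a set" where K: "\<And>n. compact (K n)" and S: "S = (\<Union>n. K n)"
    using assms unfolding sigma_compact_def by blast
  have "\<forall>n. \<exists>D. countable D \<and> D \<subseteq> K n \<and> K n \<subseteq> closure D"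
    by (meson K compact_imp_countable_dense)
  then obtain D where D: "\<And>n. countable (D n)" "\<And>n. D n \<subseteq> K n" "\<And>n. K n \<subseteq> closure (D n)"
    by metis
  have "K n \<subseteq> closure (\<Union>n. D n)" for n
    using D(3) closure_mono[of "D n" "\<Union>n. D n"] by blast
  then have "S \<subseteq> closure (\<Union>n. D n)" by (simp add: S UN_subset_iff)
  moreover have "countable (\<Union>n. D n)" "(\<Union>n. D n) \<subseteq> S"
    using D(1,2) by (auto simp: S)
  ultimately show ?thesis using that by blast
qed

lemma sigma_compact_Times:
  fixes X :: "'a::metric_space set" and Y :: "'b::metric_space set"
  assumes "sigma_compact X" "sigma_compact Y"
  shows "sigma_compact (X \<times> Y)"
proof -
  obtain KX :: "nat \<Rightarrow> 'a set" where KX: "\<And>n. compact (KX n)" "X = (\<Union>n. KX n)"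
    using assms(1) unfolding sigma_compact_def by blast
  obtain KY :: "nat \<Rightarrow> 'b set" where KY: "\<And>n. compact (KY n)" "Y = (\<Union>n. KY n)"
    using assms(2) unfolding sigma_compact_def by blast
  define K where "K n = KX (fst (prod_decode n)) \<times> KY (snd (prod_decode n))" for n
  have "X \<times> Y = (\<Union>n. K n)"
  proof
    show "X \<times> Y \<subseteq> (\<Union>n. K n)"
    proof clarify
      fix x y assume "x \<in> X" "y \<in> Y"
      then obtain i j where "x \<in> KX i" "y \<in> KY j" using KX(2) KY(2) by blast
      then show "(x, y) \<in> (\<Union>n. K n)" by (intro UN_I[of "prod_encode (i, j)"]) (simp_all add: K_def)
    qed
    show "(\<Union>n. K n) \<subseteq> X \<times> Y" by (auto simp: K_def KX(2) KY(2))
  qed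
  then show ?thesis unfolding sigma_compact_def
    by (intro exI[of _ K]) (simp add: K_def compact_Times KX(1) KY(1))
qed

lemma sigma_compact_Int_closed:
  fixes S :: "'a::metric_space set"
  assumes "sigma_compact S" "closed C"
  shows "sigma_compact (S \<inter> C)"
proof -
  obtain K :: "nat \<Rightarrow> 'a set" where "\<And>n. compact (K n)" "S = (\<Union>n. K n)"
    using assms(1) unfolding sigma_compact_def by blast
  then show ?thesis unfolding sigma_compact_def
    by (intro exI[of _ "\<lambda>n. K n \<inter> C"]) (auto simp: compact_Int_closed assms(2))
qed

lemma inj_seq_in_infinite_sets:
  fixes S :: "nat \<Rightarrow> 'a set"
  assumes "\<And>n. infinite (S n)"
  obtains a where "inj a" "\<And>n. a n \<in> S n"
proof -
  define P where "P n l \<longleftrightarrow> length l = n \<and> distinct l \<and> (\<forall>i<n. l ! i \<in> S i)" for n l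
  have extend: "\<exists>l'. P (Suc n) l' \<and> take n l' = l" if "P n l" for n l
  proof -
    have "infinite (S n - set l)"
      using assms[of n] by (simp add: Diff_infinite_finite)
    then obtain z where "z \<in> S n" "z \<notin> set l"
      using infinite_imp_nonempty by blast
    with that have "P (Suc n) (l @ [z])"
      unfolding P_def by (auto simp: nth_append less_Suc_eq)
    then show ?thesis using that by (intro exI[of _ "l @ [z]"]) (simp add: P_def)
  qed
  have "P 0 []" by (simp add: P_def)
  then obtain L :: "nat \<Rightarrow> 'a list"
    where L: "\<And>n. P n (L n)" and step: "\<And>n. take n (L (Suc n)) = L n"
    using dependent_nat_choice[of P "\<lambda>n l l'. take n l' = l", OF _ extend] by blast
  have prefix: "take n (L (n + k)) = L n" for n k
  proof (induction k)
    case (Suc k)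
    have "take n (L (n + Suc k)) = take n (take (n + k) (L (Suc (n + k))))" by simp
    also have "\<dots> = L n" using Suc by (simp only: step)
    finally show ?case .
  qed (use L in \<open>simp add: P_def\<close>)
  define a where "a i = L (Suc i) ! i" for i
  have a_nth: "a i = L (Suc n) ! i" if "i \<le> n" for i n
  proof -
    have "L (Suc i) = take (Suc i) (L (Suc n))"
      using prefix[of "Suc i" "n - i"] that by simp
    then show ?thesis by (simp add: a_def)
  qed
  show ?thesis
  proof
    show "inj a"
    proof (rule linorder_injI)
      fix i j :: nat assume "i < j"
      then show "a i \<noteq> a j"
        using L[of "Suc j"] a_nth[of i j] a_nth[of j j]
        by (simp add: P_def nth_eq_iff_index_eq)
    qed
    show "a n \<in> S n" for n using L[of "Suc n"] by (simp add: P_def a_def)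
  qed
qed

lemma limpts_range_approximating_seq:
  fixes g p :: "nat \<Rightarrow> 'a::metric_space"
  assumes "inj g" and approx: "(\<lambda>m. dist (g m) (p m)) \<longlonglongrightarrow> 0"
    and repeated: "\<And>n. infinite {m. p m = p n}"
  shows "{z. z islimpt range g} = closure (range p)"
proof
  have near: "\<exists>N. \<forall>m\<ge>N. dist (g m) (p m) < e" if "e > 0" for e
    using approx that by (simp add: LIMSEQ_iff)
  show "{z. z islimpt range g} \<subseteq> closure (range p)"
  proof
    fix z assume "z \<in> {z. z islimpt range g}"
    then have z: "infinite (range g \<inter> ball z e)" if "e > 0" for e
      using that by (simp add: islimpt_eq_infinite_ball)
    show "z \<in> closure (range p)"
      unfolding closure_approachable
    proof (intro allI impI)
      fix e :: real assume "e > 0"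
      then obtain N where N: "\<And>m. m \<ge> N \<Longrightarrow> dist (g m) (p m) < e / 2"
        using near[of "e / 2"] by auto
      have "range g \<inter> ball z (e / 2) = g ` {m. g m \<in> ball z (e / 2)}" by blast
      then have "infinite {m. g m \<in> ball z (e / 2)}"
        using z[of "e / 2"] \<open>e > 0\<close> by auto
      then obtain m where "m \<ge> N" "dist z (g m) < e / 2"
        by (auto simp: infinite_nat_iff_unbounded_le)
      then have "dist (p m) z < e"
        using N[of m] dist_triangle3[of "p m" z "g m"] by (simp add: dist_commute)
      then show "\<exists>y\<in>range p. dist y z < e" by blast
    qed
  qed
  have "p n islimpt range g" for n
    unfolding islimpt_eq_infinite_ball
  proof (intro allI impI)
    fix e :: real assume "e > 0"
    then obtain N where N: "\<And>m. m \<ge> N \<Longrightarrow> dist (g m) (p m) < e"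
      using near by auto
    have "infinite ({m. p m = p n} - {..<N})"
      using repeated[of n] by auto
    then have "infinite (g ` ({m. p m = p n} - {..<N}))"
      using \<open>inj g\<close> by (simp add: finite_image_iff inj_on_subset)
    moreover have "g ` ({m. p m = p n} - {..<N}) \<subseteq> range g \<inter> ball (p n) e"
      using N by (auto simp: dist_commute) (metis linorder_not_le)
    ultimately show "infinite (range g \<inter> ball (p n) e)"
      using finite_subset by blast
  qed
  then show "closure (range p) \<subseteq> {z. z islimpt range g}"
    using closure_minimal[OF _ closed_limpts] by blast
qed

lemma countable_enum_infinitely_repeated:
  assumes "countable D" "D \<noteq> {}"
  obtains p :: "nat \<Rightarrow> 'a" where "range p = D" "\<And>n. infinite {m. p m = p n}"
proof
  define p where "p m = from_nat_into D (fst (prod_decode m))" for m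
  have "surj (\<lambda>m. fst (prod_decode m))"
  proof (rule surjI)
    show "fst (prod_decode (prod_encode (n, 0))) = n" for n by simp
  qed
  then have "range p = range (from_nat_into D)"
    unfolding p_def by (metis image_image)
  then show "range p = D" using assms by simp
  fix n
  let ?c = "fst (prod_decode n)"
  have "range (\<lambda>k. prod_encode (?c, k)) \<subseteq> {m. p m = p n}"
    by (auto simp: p_def)
  moreover have "inj (\<lambda>k. prod_encode (?c, k))"
    by (auto simp: inj_def)
  ultimately show "infinite {m. p m = p n}"
    using range_inj_infinite finite_subset by blast
qed

lemma graph_limpts_approximating_seq:
  fixes X :: "'a::metric_space set" and Y :: "'b::metric_space set"
    and p :: "nat \<Rightarrow> 'a \<times> 'b"
  assumes perfect: "\<forall>x\<in>X. x islimpt X" and "range p \<subseteq> X \<times> Y"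
    and repeated: "\<And>n. infinite {m. p m = p n}"
  obtains A f where "countable A" "A \<subseteq> X" "f ` A \<subseteq> Y"
    "{z. z islimpt graph_on A f} = closure (range p)"
proof -
  define S where "S m = X \<inter> ball (fst (p m)) (inverse (Suc m))" for m
  have pXY: "p m \<in> X \<times> Y" for m using assms(2) by blast
  then have "fst (p m) islimpt X" for m
    using perfect by (simp add: mem_Times_iff)
  then have "infinite (S m)" for m
    by (simp add: S_def islimpt_eq_infinite_ball)
  then obtain a where "inj a" and "\<And>m. a m \<in> S m"
    using inj_seq_in_infinite_sets by blast
  then have a: "\<And>m. a m \<in> X \<inter> ball (fst (p m)) (inverse (Suc m))"
    by (simp add: S_def)
  define f where "f x = snd (p (inv a x))" for x
  define g where "g m = (a m, snd (p m))" for m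
  have graph: "graph_on (range a) f = range g"
    unfolding graph_on_def g_def f_def by (auto simp: inv_f_f[OF \<open>inj a\<close>])
  have "inj g" using \<open>inj a\<close> by (auto simp: inj_def g_def)
  have "dist (g m) (p m) \<le> inverse (Suc m)" for m
    using a[of m] dist_Pair_Pair[of "a m" "snd (p m)" "fst (p m)" "snd (p m)"]
    by (simp add: g_def dist_commute)
  then have "(\<lambda>m. dist (g m) (p m)) \<longlonglongrightarrow> 0"
    by (intro tendsto_sandwich[OF _ _ tendsto_const LIMSEQ_inverse_real_of_nat]) auto
  then have "{z. z islimpt graph_on (range a) f} = closure (range p)"
    using limpts_range_approximating_seq[OF \<open>inj g\<close> _ repeated] graph by simp
  moreover have "range a \<subseteq> X" "f ` range a \<subseteq> Y"
    using a pXY by (auto simp: f_def inv_f_f[OF \<open>inj a\<close>] mem_Times_iff)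
  ultimately show ?thesis by (intro that[of "range a" f]) simp_all
qed

theorem lemma2p5:
  fixes X :: "'a::metric_space set" and Y :: "'b::metric_space set"
    and T :: "('a \<times> 'b) set"
  assumes "sigma_compact X" and "sigma_compact Y"
    and "\<forall>x\<in>X. x islimpt X"
    and "closedin (top_of_set (X \<times> Y)) T"
  shows "\<exists>(A::'a set) (f::'a \<Rightarrow> 'b). countable A \<and> A \<subseteq> X \<and> f ` A \<subseteq> Y \<and>
           acc_points_in (X \<times> Y) (graph_on A f) = T"
proof (cases "T = {}")
  case True
  then show ?thesis
    by (intro exI[of _ "{}"]) (simp add: graph_on_def acc_points_in_def)
next
  case False
  obtain C where "closed C" and T: "T = X \<times> Y \<inter> C"
    using assms(4) closedin_closed by blast
  then have "sigma_compact T"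
    using sigma_compact_Int_closed sigma_compact_Times assms(1,2) by blast
  then obtain D where "countable D" "D \<subseteq> T" "T \<subseteq> closure D"
    by (rule sigma_compact_imp_countable_dense)
  have "D \<noteq> {}" using \<open>T \<subseteq> closure D\<close> False by auto
  with \<open>countable D\<close> obtain p :: "nat \<Rightarrow> 'a \<times> 'b"
    where "range p = D" and repeated: "\<And>n. infinite {m. p m = p n}"
    using countable_enum_infinitely_repeated by blast
  then have "range p \<subseteq> X \<times> Y" using \<open>D \<subseteq> T\<close> T by blast
  then obtain A f where "countable A" "A \<subseteq> X" "f ` A \<subseteq> Y"
      and limpts: "{z. z islimpt graph_on A f} = closure (range p)"
    using graph_limpts_approximating_seq[OF assms(3) _ repeated] by blast
  have "closure D \<subseteq> C"
    using \<open>D \<subseteq> T\<close> T \<open>closed C\<close> by (intro closure_minimal) auto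
  then have "acc_points_in (X \<times> Y) (graph_on A f) = T"
    using limpts \<open>range p = D\<close> \<open>T \<subseteq> closure D\<close> T by (auto simp: acc_points_in_def)
  with \<open>countable A\<close> \<open>A \<subseteq> X\<close> \<open>f ` A \<subseteq> Y\<close> show ?thesis by blast
qed

end
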